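(* Let $k$ be an algebraically closed field of characteristic $0$. Let $G$ be a finite group acting on an irreducible affine algebraic variety $X$, and let $Z$ be an irreducible affine algebraic variety (endowed with an action of an algebraic torus $T$ having an open orbit). Let $\pi_{X,G}\colon X\to X/\!\!/G$ be the categorical quotient. Then for every two morphisms $\psi_1,\psi_2\colon Z\to X$ the following are equivalent: (i) $\pi_{X,G}\circ\psi_1=\pi_{X,G}\circ\psi_2$; (ii) there is $g\in G$ such that $\psi_2=g\cdot\psi_1$.
   Context: $X/\!\!/G$ is the affine variety with coordinate ring $k[X]^G$ and $\pi_{X,G}$ is the morphism induced by the inclusion $k[X]^G\subseteq k[X]$. For a morphism $\psi\colon Z\to X$ and $g\in G$, the morphism $g\cdot\psi$ is defined by $(g\cdot\psi)(z)=g\cdot(\psi(z))$. *)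

theory Defs
  imports "HOL-Algebra.Group_Action" "HOL-Computational_Algebra.Polynomial"
begin

definition alg_closed :: "'k::field itself \<Rightarrow> bool" where
  "alg_closed _ \<longleftrightarrow> (\<forall>p :: 'k poly. degree p > 0 \<longrightarrow> (\<exists>x. poly p x = 0))"

inductive_set poly_fun :: "(('v \<Rightarrow> 'k::comm_ring_1) \<Rightarrow> 'k) set" where
  pf_const: "(\<lambda>x. c) \<in> poly_fun"
| pf_var: "(\<lambda>x. x i) \<in> poly_fun"
| pf_add: "p \<in> poly_fun \<Longrightarrow> q \<in> poly_fun \<Longrightarrow> (\<lambda>x. p x + q x) \<in> poly_fun"
| pf_mult: "p \<in> poly_fun \<Longrightarrow> q \<in> poly_fun \<Longrightarrow> (\<lambda>x. p x * q x) \<in> poly_fun"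

definition zariski_closed :: "('v \<Rightarrow> 'k::comm_ring_1) set \<Rightarrow> bool" where
  "zariski_closed A \<longleftrightarrow> (\<exists>S \<subseteq> poly_fun. A = {x. \<forall>f\<in>S. f x = 0})"

definition affine_variety :: "('v \<Rightarrow> 'k::comm_ring_1) set \<Rightarrow> bool" where
  "affine_variety X \<longleftrightarrow> zariski_closed X \<and> X \<noteq> {}"

definition irreducible_variety :: "('v \<Rightarrow> 'k::comm_ring_1) set \<Rightarrow> bool" where
  "irreducible_variety X \<longleftrightarrow> affine_variety X \<and>
     (\<forall>A B. zariski_closed A \<longrightarrow> zariski_closed B \<longrightarrow> X \<subseteq> A \<union> B \<longrightarrow> X \<subseteq> A \<or> X \<subseteq> B)"

definition morphism :: "('w \<Rightarrow> 'k::comm_ring_1) set \<Rightarrow> ('v \<Rightarrow> 'k) set \<Rightarrow> (('w \<Rightarrow> 'k) \<Rightarrow> ('v \<Rightarrow> 'k)) \<Rightarrow> bool" where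
  "morphism Z X \<psi> \<longleftrightarrow> \<psi> ` Z \<subseteq> X \<and> (\<forall>i. \<exists>p\<in>poly_fun. \<forall>z\<in>Z. \<psi> z i = p z)"

text \<open>Algebraic torus T = (k^*)^r (coordinates indexed by 'r) and its regular action on Z:
  the action map T \<times> Z \<rightarrow> Z is given coordinatewise by polynomials in t, t^{-1} and z.\<close>
definition torus :: "('r \<Rightarrow> 'k::field) set" where
  "torus = {t. \<forall>i. t i \<noteq> 0}"

definition torus_coords :: "('r \<Rightarrow> 'k::field) \<Rightarrow> ('w \<Rightarrow> 'k) \<Rightarrow> (('r + 'r) + 'w \<Rightarrow> 'k)" where
  "torus_coords t z = (\<lambda>v. case v of Inl (Inl i) \<Rightarrow> t i | Inl (Inr i) \<Rightarrow> inverse (t i) | Inr j \<Rightarrow> z j)"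

definition torus_action :: "('w \<Rightarrow> 'k::field) set \<Rightarrow> (('r \<Rightarrow> 'k) \<Rightarrow> ('w \<Rightarrow> 'k) \<Rightarrow> ('w \<Rightarrow> 'k)) \<Rightarrow> bool" where
  "torus_action Z \<tau> \<longleftrightarrow>
     (\<forall>t\<in>torus. \<forall>z\<in>Z. \<tau> t z \<in> Z)
   \<and> (\<forall>z\<in>Z. \<tau> (\<lambda>i. 1) z = z)
   \<and> (\<forall>s\<in>torus. \<forall>t\<in>torus. \<forall>z\<in>Z. \<tau> (\<lambda>i. s i * t i) z = \<tau> s (\<tau> t z))
   \<and> (\<forall>j. \<exists>p\<in>poly_fun. \<forall>t\<in>torus. \<forall>z\<in>Z. \<tau> t z j = p (torus_coords t z))"

definition has_open_orbit :: "('w \<Rightarrow> 'k::field) set \<Rightarrow> (('r \<Rightarrow> 'k) \<Rightarrow> ('w \<Rightarrow> 'k) \<Rightarrow> ('w \<Rightarrow> 'k)) \<Rightarrow> bool" where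
  "has_open_orbit Z \<tau> \<longleftrightarrow>
     (\<exists>z0\<in>Z. \<exists>C. zariski_closed C \<and> {\<tau> t z0 | t. t \<in> torus} = Z - C)"

text \<open>G-invariant regular functions on X (represented by polynomials on the ambient space),
  i.e. elements of k[X]^G.\<close>
definition invariant_polys :: "('g, 'c) monoid_scheme \<Rightarrow> ('g \<Rightarrow> ('v \<Rightarrow> 'k) \<Rightarrow> ('v \<Rightarrow> 'k))
     \<Rightarrow> ('v \<Rightarrow> 'k::comm_ring_1) set \<Rightarrow> (('v \<Rightarrow> 'k) \<Rightarrow> 'k) set" where
  "invariant_polys G act X = {f \<in> poly_fun. \<forall>g\<in>carrier G. \<forall>x\<in>X. f (act g x) = f x}"

text \<open>The quotient morphism \<pi>_{X,G} : X \<rightarrow> X//G. A point of X//G = Spec k[X]^G is represented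
  by the corresponding k-algebra character of k[X]^G; \<pi>_{X,G}(x) is evaluation at x.\<close>
definition quot_map :: "('g, 'c) monoid_scheme \<Rightarrow> ('g \<Rightarrow> ('v \<Rightarrow> 'k) \<Rightarrow> ('v \<Rightarrow> 'k))
     \<Rightarrow> ('v \<Rightarrow> 'k::comm_ring_1) set \<Rightarrow> ('v \<Rightarrow> 'k) \<Rightarrow> ((('v \<Rightarrow> 'k) \<Rightarrow> 'k) \<Rightarrow> 'k)" where
  "quot_map G act X x = (\<lambda>f. if f \<in> invariant_polys G act X then f x else 0)"

end

theory Submission
  imports Defs
begin

text \<open>Invariant polynomials of a finite group separate orbits: if \<open>x\<close> is not in the orbit
  of \<open>y\<close>, take a polynomial \<open>f\<close> vanishing at \<open>x\<close> and equal to \<open>1\<close> on the orbit of \<open>y\<close>; the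
  product of the translates \<open>f \<circ> g\<close> over \<open>g \<in> G\<close> is invariant, vanishes at \<open>x\<close> and is \<open>1\<close>
  at \<open>y\<close>. Hence (i) says that \<open>\<psi>\<^sub>2(z)\<close> lies in the orbit of \<open>\<psi>\<^sub>1(z)\<close> for every \<open>z\<close>, i.e. \<open>Z\<close> is
  covered by the finitely many closed sets \<open>{z. \<psi>\<^sub>2(z) = g \<cdot> \<psi>\<^sub>1(z)}\<close>, and irreducibility of \<open>Z\<close>
  forces one of them to be all of \<open>Z\<close>.\<close>

lemma poly_fun_diff:
  assumes "p \<in> poly_fun" "q \<in> poly_fun"
  shows "(\<lambda>x. p x - q x) \<in> poly_fun"
proof -
  have "(\<lambda>x. p x + (- 1) * q x) \<in> poly_fun"
    using assms by (intro poly_fun.pf_add poly_fun.pf_mult poly_fun.pf_const)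
  then show ?thesis by simp
qed

lemma poly_fun_prod:
  assumes "\<And>a. a \<in> A \<Longrightarrow> f a \<in> poly_fun"
  shows "(\<lambda>x. \<Prod>a\<in>A. f a x) \<in> poly_fun"
proof (cases "finite A")
  case True
  then show ?thesis using assms
    by (induction A rule: finite_induct) (auto intro: poly_fun.pf_const poly_fun.pf_mult)
qed (simp add: poly_fun.pf_const)

lemma poly_fun_subst:
  assumes "p \<in> poly_fun" and "\<And>i. q i \<in> poly_fun"
  shows "(\<lambda>w. p (\<lambda>i. q i w)) \<in> poly_fun"
  using assms(1) by induction (auto intro: assms(2) poly_fun.intros)

lemma poly_fun_pullback:
  assumes "morphism Z X \<phi>" and "p \<in> poly_fun"
  shows "\<exists>q\<in>poly_fun. \<forall>z\<in>Z. q z = p (\<phi> z)"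
proof -
  obtain Q where Q: "\<And>i. Q i \<in> poly_fun" "\<And>i z. z \<in> Z \<Longrightarrow> \<phi> z i = Q i z"
    using assms(1) unfolding morphism_def by metis
  show ?thesis
  proof
    show "(\<lambda>z. p (\<lambda>i. Q i z)) \<in> poly_fun"
      using assms(2) Q(1) by (rule poly_fun_subst)
    show "\<forall>z\<in>Z. p (\<lambda>i. Q i z) = p (\<phi> z)"
      using Q(2) by (metis ext)
  qed
qed

lemma morphism_mem: "morphism Z X \<phi> \<Longrightarrow> z \<in> Z \<Longrightarrow> \<phi> z \<in> X"
  unfolding morphism_def by blast

lemma morphism_comp:
  assumes "morphism Z Y \<phi>" and "morphism Y X \<chi>"
  shows "morphism Z X (\<chi> \<circ> \<phi>)"
proof -
  have "\<exists>q\<in>poly_fun. \<forall>z\<in>Z. (\<chi> \<circ> \<phi>) z i = q z" for i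
  proof -
    obtain p where "p \<in> poly_fun" "\<forall>y\<in>Y. \<chi> y i = p y"
      using assms(2) unfolding morphism_def by blast
    moreover obtain q where "q \<in> poly_fun" "\<forall>z\<in>Z. q z = p (\<phi> z)"
      using poly_fun_pullback[OF assms(1) \<open>p \<in> poly_fun\<close>] by blast
    moreover have "\<phi> ` Z \<subseteq> Y"
      using assms(1) unfolding morphism_def by blast
    ultimately show ?thesis
      by (metis comp_apply image_subset_iff)
  qed
  moreover have "(\<chi> \<circ> \<phi>) ` Z \<subseteq> X"
    using assms unfolding morphism_def by (metis image_comp image_mono order_trans)
  ultimately show ?thesis
    unfolding morphism_def by blast
qed

lemma zariski_closed_empty: "zariski_closed ({} :: ('v \<Rightarrow> 'k::comm_ring_1) set)"
  unfolding zariski_closed_def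
  by (rule exI[of _ "{\<lambda>x. 1}"]) (auto intro: poly_fun.pf_const)

lemma zariski_closed_Un:
  assumes "zariski_closed (A :: ('v \<Rightarrow> 'k::field) set)" and "zariski_closed B"
  shows "zariski_closed (A \<union> B)"
proof -
  obtain S where S: "S \<subseteq> poly_fun" "A = {x. \<forall>f\<in>S. f x = 0}"
    using assms(1) unfolding zariski_closed_def by blast
  obtain T where T: "T \<subseteq> poly_fun" "B = {x. \<forall>f\<in>T. f x = 0}"
    using assms(2) unfolding zariski_closed_def by blast
  define U where "U = {(\<lambda>x. f x * g x) | f g. f \<in> S \<and> g \<in> T}"
  have "U \<subseteq> poly_fun"
    using S T unfolding U_def by (auto intro: poly_fun.pf_mult)
  moreover have "A \<union> B = {x. \<forall>h\<in>U. h x = 0}"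
    using S T unfolding U_def by auto (metis mult_eq_0_iff)
  ultimately show ?thesis
    unfolding zariski_closed_def by blast
qed

lemma zariski_closed_UN:
  assumes "finite I" and "\<And>i. i \<in> I \<Longrightarrow> zariski_closed (A i :: ('v \<Rightarrow> 'k::field) set)"
  shows "zariski_closed (\<Union>i\<in>I. A i)"
  using assms
  by (induction I rule: finite_induct) (auto intro: zariski_closed_empty zariski_closed_Un)

lemma irreducible_variety_finite_cover:
  assumes "irreducible_variety (Z :: ('v \<Rightarrow> 'k::field) set)" and "finite I"
    and "\<And>i. i \<in> I \<Longrightarrow> zariski_closed (A i)" and "Z \<subseteq> (\<Union>i\<in>I. A i)"
  shows "\<exists>i\<in>I. Z \<subseteq> A i"
  using assms(2-4)
proof (induction I rule: finite_induct)
  case empty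
  then show ?case
    using assms(1) unfolding irreducible_variety_def affine_variety_def by auto
next
  case (insert a I)
  have "zariski_closed (\<Union>i\<in>I. A i)"
    using insert by (intro zariski_closed_UN) auto
  moreover have "Z \<subseteq> A a \<union> (\<Union>i\<in>I. A i)"
    using insert.prems(2) by auto
  ultimately have "Z \<subseteq> A a \<or> Z \<subseteq> (\<Union>i\<in>I. A i)"
    using assms(1) insert.prems(1) unfolding irreducible_variety_def by blast
  then show ?case
    using insert by auto
qed

lemma morphism_equalizer_closed:
  assumes "morphism Z X \<phi>" and "morphism Z X \<chi>"
  shows "\<exists>C. zariski_closed C \<and> {z\<in>Z. \<phi> z = \<chi> z} = Z \<inter> C"
proof -
  obtain P where P: "\<And>i. P i \<in> poly_fun" "\<And>i z. z \<in> Z \<Longrightarrow> \<phi> z i = P i z"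
    using assms(1) unfolding morphism_def by metis
  obtain Q where Q: "\<And>i. Q i \<in> poly_fun" "\<And>i z. z \<in> Z \<Longrightarrow> \<chi> z i = Q i z"
    using assms(2) unfolding morphism_def by metis
  define S where "S = range (\<lambda>i w. P i w - Q i w)"
  have "S \<subseteq> poly_fun"
    using P(1) Q(1) unfolding S_def by (auto intro: poly_fun_diff)
  moreover have "{z\<in>Z. \<phi> z = \<chi> z} = Z \<inter> {w. \<forall>f\<in>S. f w = 0}"
    using P(2) Q(2) unfolding S_def by (auto simp: fun_eq_iff)
  ultimately show ?thesis
    unfolding zariski_closed_def by blast
qed

lemma irreducible_variety_morphism_eq_one_of_finitely_many:
  assumes "irreducible_variety (Z :: ('w \<Rightarrow> 'k::field) set)" and "finite I"
    and "\<And>i. i \<in> I \<Longrightarrow> morphism Z X (\<phi> i)" and "morphism Z X \<psi>"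
    and "\<And>z. z \<in> Z \<Longrightarrow> \<exists>i\<in>I. \<psi> z = \<phi> i z"
  shows "\<exists>i\<in>I. \<forall>z\<in>Z. \<psi> z = \<phi> i z"
proof -
  have "\<forall>i\<in>I. \<exists>C. zariski_closed C \<and> {z\<in>Z. \<psi> z = \<phi> i z} = Z \<inter> C"
    using morphism_equalizer_closed[OF assms(4) assms(3)] by blast
  from bchoice[OF this] obtain C where
    C: "\<forall>i\<in>I. zariski_closed (C i) \<and> {z\<in>Z. \<psi> z = \<phi> i z} = Z \<inter> C i"
    by blast
  have "Z \<subseteq> (\<Union>i\<in>I. C i)"
  proof
    fix z assume "z \<in> Z"
    with assms(5) obtain i where "i \<in> I" "\<psi> z = \<phi> i z"
      by blast
    with C \<open>z \<in> Z\<close> show "z \<in> (\<Union>i\<in>I. C i)"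
      by blast
  qed
  then obtain i where "i \<in> I" "Z \<subseteq> C i"
    using irreducible_variety_finite_cover[OF assms(1,2)] C by blast
  then show ?thesis
    using C by blast
qed

lemma poly_fun_separates_point_from_finite_set:
  fixes x :: "'v \<Rightarrow> 'k::field"
  assumes "finite S" and "x \<notin> S"
  shows "\<exists>f\<in>poly_fun. f x = 0 \<and> (\<forall>y\<in>S. f y = 1)"
proof -
  have "\<forall>s\<in>S. \<exists>i. s i \<noteq> x i"
    using assms(2) by (metis ext)
  then obtain c where c: "\<And>s. s \<in> S \<Longrightarrow> s (c s) \<noteq> x (c s)"
    by metis
  define u where "u s w = (w (c s) - x (c s)) * inverse (s (c s) - x (c s))" for s w
  define f where "f w = 1 - (\<Prod>s\<in>S. 1 - u s w)" for w
  have factor_poly: "(\<lambda>w. 1 - u s w) \<in> poly_fun" for s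
    unfolding u_def by (intro poly_fun_diff poly_fun.intros)
  have "f \<in> poly_fun"
    unfolding f_def[abs_def]
    by (intro poly_fun_diff[OF poly_fun.pf_const] poly_fun_prod factor_poly)
  moreover have "f x = 0"
    unfolding f_def u_def by simp
  moreover have "f y = 1" if "y \<in> S" for y
  proof -
    have "u y y = 1"
      using c[OF that] unfolding u_def by simp
    then show ?thesis
      unfolding f_def using assms(1) that by auto
  qed
  ultimately show ?thesis
    by blast
qed

lemma invariant_polys_orbit_prod:
  assumes "group_action G X act" and "\<forall>g\<in>carrier G. morphism X X (act g)"
    and "f \<in> poly_fun"
  shows "\<exists>F\<in>invariant_polys G act X. \<forall>w\<in>X. F w = (\<Prod>h\<in>carrier G. f (act h w))"
proof -
  interpret group_action G X act by (rule assms(1))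
  interpret group G
    using group_hom group_hom.axioms(1) by blast
  have "\<forall>h\<in>carrier G. \<exists>q\<in>poly_fun. \<forall>w\<in>X. q w = f (act h w)"
    using poly_fun_pullback assms(2,3) by blast
  then obtain P where P: "\<And>h. h \<in> carrier G \<Longrightarrow> P h \<in> poly_fun"
    "\<And>h w. h \<in> carrier G \<Longrightarrow> w \<in> X \<Longrightarrow> P h w = f (act h w)"
    by metis
  define F where "F w = (\<Prod>h\<in>carrier G. P h w)" for w
  have F_X: "F w = (\<Prod>h\<in>carrier G. f (act h w))" if "w \<in> X" for w
    unfolding F_def using P(2) that by simp
  have "F (act g w) = F w" if g: "g \<in> carrier G" and w: "w \<in> X" for g w
  proof -
    have "F (act g w) = (\<Prod>h\<in>carrier G. f (act (h \<otimes>\<^bsub>G\<^esub> g) w))"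
      using F_X[OF element_image[OF g w refl]] composition_rule[OF w _ g] by simp
    also have "\<dots> = (\<Prod>h\<in>carrier G. f (act h w))"
      by (rule prod.reindex_bij_witness[where i = "\<lambda>h. h \<otimes>\<^bsub>G\<^esub> inv\<^bsub>G\<^esub> g" and j = "\<lambda>h. h \<otimes>\<^bsub>G\<^esub> g"])
        (use g in \<open>auto simp: m_assoc\<close>)
    finally show ?thesis
      using F_X[OF w] by simp
  qed
  moreover have "F \<in> poly_fun"
    unfolding F_def[abs_def] using P(1) by (rule poly_fun_prod)
  ultimately show ?thesis
    unfolding invariant_polys_def using F_X by blast
qed

lemma invariant_polys_separate_orbits:
  fixes x :: "'v \<Rightarrow> 'k::field"
  assumes "group_action G X act" and "finite (carrier G)"
    and "\<forall>g\<in>carrier G. morphism X X (act g)"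
    and "x \<in> X" and "y \<in> X" and "x \<notin> orbit G act y"
  shows "\<exists>F\<in>invariant_polys G act X. F x \<noteq> F y"
proof -
  interpret group_action G X act by (rule assms(1))
  interpret group G
    using group_hom group_hom.axioms(1) by blast
  obtain f where f: "f \<in> poly_fun" "f x = 0" "\<And>w. w \<in> orbit G act y \<Longrightarrow> f w = 1"
    using poly_fun_separates_point_from_finite_set[of "orbit G act y" x] assms(2,6)
    unfolding orbit_def by auto
  obtain F where F: "F \<in> invariant_polys G act X"
    "\<And>w. w \<in> X \<Longrightarrow> F w = (\<Prod>h\<in>carrier G. f (act h w))"
    using invariant_polys_orbit_prod[OF assms(1,3) f(1)] by blast
  have "act \<one>\<^bsub>G\<^esub> x = x"
    using id_eq_one assms(4) by (metis restrict_apply')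
  then have "F x = 0"
    using F(2)[OF assms(4)] f(2) assms(2) by (metis one_closed prod_zero_iff)
  moreover have "F y = 1"
    using F(2)[OF assms(5)] f(3) unfolding orbit_def by (auto intro!: prod.neutral)
  ultimately show ?thesis
    using F(1) by (metis zero_neq_one)
qed

lemma quot_map_eq_imp_orbit:
  fixes x :: "'v \<Rightarrow> 'k::field"
  assumes "group_action G X act" and "finite (carrier G)"
    and "\<forall>g\<in>carrier G. morphism X X (act g)"
    and "x \<in> X" and "y \<in> X" and "quot_map G act X x = quot_map G act X y"
  shows "x \<in> orbit G act y"
  using invariant_polys_separate_orbits[OF assms(1-5)] assms(6)
  unfolding quot_map_def by (metis (mono_tags))

lemma quot_map_act:
  assumes "g \<in> carrier G" and "x \<in> X"
  shows "quot_map G act X (act g x) = quot_map G act X x"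
  using assms unfolding quot_map_def invariant_polys_def by auto

theorem lemma2p9:
  fixes G :: "('g, 'c) monoid_scheme"
    and act :: "'g \<Rightarrow> ('n::finite \<Rightarrow> 'k::field_char_0) \<Rightarrow> ('n \<Rightarrow> 'k)"
    and X :: "('n \<Rightarrow> 'k) set"
    and Z :: "('m::finite \<Rightarrow> 'k) set"
    and \<tau> :: "('r::finite \<Rightarrow> 'k) \<Rightarrow> ('m \<Rightarrow> 'k) \<Rightarrow> ('m \<Rightarrow> 'k)"
    and \<psi>1 \<psi>2 :: "('m \<Rightarrow> 'k) \<Rightarrow> ('n \<Rightarrow> 'k)"
  assumes "alg_closed TYPE('k)"
    and "irreducible_variety X"
    and "group G" and "finite (carrier G)"
    and "group_action G X act"
    and "\<forall>g\<in>carrier G. morphism X X (act g)"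
    and "irreducible_variety Z"
    and "torus_action Z \<tau>" and "has_open_orbit Z \<tau>"
    and "morphism Z X \<psi>1" and "morphism Z X \<psi>2"
  shows "(\<forall>z\<in>Z. quot_map G act X (\<psi>1 z) = quot_map G act X (\<psi>2 z))
     \<longleftrightarrow> (\<exists>g\<in>carrier G. \<forall>z\<in>Z. \<psi>2 z = act g (\<psi>1 z))"
proof
  assume same_image: "\<forall>z\<in>Z. quot_map G act X (\<psi>1 z) = quot_map G act X (\<psi>2 z)"
  have in_orbit: "\<psi>2 z \<in> orbit G act (\<psi>1 z)" if "z \<in> Z" for z
    using quot_map_eq_imp_orbit[OF assms(5,4,6)] morphism_mem[OF assms(10) that]
      morphism_mem[OF assms(11) that] same_image that by simp
  have "morphism Z X (act g \<circ> \<psi>1)" if "g \<in> carrier G" for g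
    using assms(6,10) morphism_comp that by blast
  moreover have "\<exists>g\<in>carrier G. \<psi>2 z = (act g \<circ> \<psi>1) z" if "z \<in> Z" for z
    using in_orbit[OF that] unfolding orbit_def by auto
  ultimately have "\<exists>g\<in>carrier G. \<forall>z\<in>Z. \<psi>2 z = (act g \<circ> \<psi>1) z"
    by (rule irreducible_variety_morphism_eq_one_of_finitely_many[OF assms(7,4) _ assms(11)])
  then show "\<exists>g\<in>carrier G. \<forall>z\<in>Z. \<psi>2 z = act g (\<psi>1 z)"
    by simp
next
  assume "\<exists>g\<in>carrier G. \<forall>z\<in>Z. \<psi>2 z = act g (\<psi>1 z)"
  then obtain g where g: "g \<in> carrier G" "\<forall>z\<in>Z. \<psi>2 z = act g (\<psi>1 z)"
    by blast
  then show "\<forall>z\<in>Z. quot_map G act X (\<psi>1 z) = quot_map G act X (\<psi>2 z)"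
    using morphism_mem[OF assms(10)] by (simp add: quot_map_act[OF g(1)])
qed

end
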